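(* Fix spins $j_1,\dots,j_4$ with $J=\sum_i j_i\in\mathbb{Z}$. For admissible $(S,T)$, with $k_{ij}=k_{ij}(j_i,S,T)$, $$2J_1\cdot J_2\,|S,T\rangle=\big(S(S+1)-j_1(j_1+1)-j_2(j_2+1)\big)|S,T\rangle+\big((k_{14}+1)(k_{23}+1)|S,T+1\rangle-k_{14}k_{23}|S,T\rangle\big)+\big((k_{13}+1)(k_{24}+1)|S,T-1\rangle-k_{13}k_{24}|S,T\rangle\big).$$ In particular $J_1\cdot J_2$ does not change the value of $S$. Similarly, $J_1\cdot J_3|S,T\rangle$ is a linear combination of states $|S',T\rangle$ with the same $T$.
   Context: $(z_i|S,T\rangle=\prod_{i<j}[z_i|z_j\rangle^{k_{ij}}/k_{ij}!$ is a holomorphic function of $z_1,\dots,z_4\in\mathbb{C}^2$, where $[z|w\rangle=z_0w_1-z_1w_0$. Here $U=J-S-T$ and $k_{12}=j_1+j_2-S$, $k_{34}=j_3+j_4-S$, $k_{13}=j_1+j_3-T$, $k_{24}=j_2+j_4-T$, $k_{14}=j_1+j_4-U$, $k_{23}=j_2+j_3-U$. $(S,T)$ is admissible iff all $k_{ij}\ge0$, and $|S,T\rangle:=0$ if $(S,T)$ is not admissible. The operators act on holomorphic functions of $(z_1,\dots,z_4)$ by $$E_{ij}=\sum_{A=0,1}z_i^A\frac{\partial}{\partial z_j^A},\qquad 2J_i\cdot J_j:=E_{ij}E_{ji}-\tfrac12E_{ii}E_{jj}-E_{ii}.$$ *)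

theory Defs
  imports "HOL-Analysis.Analysis"
begin

text \<open>Points: z :: nat \<Rightarrow> nat \<Rightarrow> complex, where z i A is the component A (A = 0,1)
  of the spinor z_i in C^2, i = 1..4. Functions are maps to complex.\<close>

type_synonym cfun = "(nat \<Rightarrow> nat \<Rightarrow> complex) \<Rightarrow> complex"

definition bra :: "(nat \<Rightarrow> complex) \<Rightarrow> (nat \<Rightarrow> complex) \<Rightarrow> complex" where
  "bra z w = z 0 * w 1 - z 1 * w 0"

definition pderiv_z :: "nat \<Rightarrow> nat \<Rightarrow> cfun \<Rightarrow> cfun" where
  "pderiv_z j A f z = deriv (\<lambda>w. f (z(j := (z j)(A := w)))) (z j A)"

definition Eop :: "nat \<Rightarrow> nat \<Rightarrow> cfun \<Rightarrow> cfun" where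
  "Eop i j f z = (\<Sum>A\<in>{0,1::nat}. z i A * pderiv_z j A f z)"

definition twoJdot :: "nat \<Rightarrow> nat \<Rightarrow> cfun \<Rightarrow> cfun" where
  "twoJdot i j f z = Eop i j (Eop j i f) z - (1/2) * Eop i i (Eop j j f) z - Eop i i f z"

definition Jtot :: "(nat \<Rightarrow> real) \<Rightarrow> real" where
  "Jtot jj = jj 1 + jj 2 + jj 3 + jj 4"

definition kval :: "(nat \<Rightarrow> real) \<Rightarrow> real \<Rightarrow> real \<Rightarrow> nat \<Rightarrow> nat \<Rightarrow> real" where
  "kval jj S T a b =
     (if {a,b} = {1,2} \<or> {a,b} = {3,4} then jj a + jj b - S
      else if {a,b} = {1,3} \<or> {a,b} = {2,4} then jj a + jj b - T
      else jj a + jj b - (Jtot jj - S - T))"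

definition pairs :: "(nat \<times> nat) set" where
  "pairs = {(a,b). a \<in> {1..4} \<and> b \<in> {1..4} \<and> a < b}"

definition admissible :: "(nat \<Rightarrow> real) \<Rightarrow> real \<Rightarrow> real \<Rightarrow> bool" where
  "admissible jj S T \<longleftrightarrow> (\<forall>(a,b)\<in>pairs. kval jj S T a b \<in> \<int> \<and> kval jj S T a b \<ge> 0)"

definition state :: "(nat \<Rightarrow> real) \<Rightarrow> real \<Rightarrow> real \<Rightarrow> cfun" where
  "state jj S T z =
     (if admissible jj S T then
        (\<Prod>(a,b)\<in>pairs. bra (z a) (z b) ^ nat \<lfloor>kval jj S T a b\<rfloor>
                          / of_nat (fact (nat \<lfloor>kval jj S T a b\<rfloor>)))
      else 0)"

end

theory Submission
  imports Defs
begin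

text \<open>With divided powers x^[n] = x^n / n! (and x^[n] = 0 for n < 0) every state is the
  monomial of the brackets [z_a|z_b> with divided-power exponents k_ab, and non-admissible labels
  give 0 automatically. E_ij is a derivation replacing z_j by z_i, so it turns [z_a|z_b>^[k] into
  [z_a|z_b>^[k-1] times a bracket, and multiplying by a bracket raises a divided power:
  x x^[n] = (n+1) x^[n+1]. Hence each E_ij maps monomials to combinations of monomials with shifted
  exponents. In E_12 E_21 the exponents k_12 and k_34 never move, because [z_2|z_2> = 0, so
  2 J_1.J_2 only shifts T; symmetrically 2 J_1.J_3 only shifts S.\<close>

definition dpow :: "int \<Rightarrow> complex \<Rightarrow> complex" where
  "dpow n x = (if n < 0 then 0 else x ^ nat n / of_nat (fact (nat n)))"

lemma mult_dpow: "x * dpow n x = of_int (n + 1) * dpow (n + 1) x"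
proof (cases "n < 0")
  case True
  then show ?thesis by (cases "n = -1") (auto simp: dpow_def)
next
  case False
  then obtain m where m: "n = int m" by (metis nonneg_int_cases not_less)
  have "nat (n + 1) = Suc m" "of_int (n + 1) = (of_nat (Suc m) :: complex)" using m by simp_all
  then have "of_int (n + 1) * dpow (n + 1) x = of_nat (Suc m) * (x ^ Suc m / of_nat (fact (Suc m)))"
    using m unfolding dpow_def by (simp only:) simp
  also have "\<dots> = x * (x ^ m / of_nat (fact m))"
    by (simp only: fact_Suc power_Suc of_nat_mult) (simp del: of_nat_Suc)
  finally show ?thesis using m by (simp add: dpow_def)
qed

lemma has_field_derivative_dpow: "(dpow n has_field_derivative dpow (n - 1) x) (at x)"
proof (cases "n < 1")
  case True
  then have "dpow n = (\<lambda>_. if n < 0 then 0 else 1)" by (auto simp: dpow_def fun_eq_iff)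
  with True show ?thesis by (simp add: dpow_def)
next
  case False
  define m where "m = nat n - 1"
  have m: "n = int (Suc m)" using False by (simp add: m_def)
  have "dpow n = (\<lambda>x. x ^ Suc m / of_nat (fact (Suc m)))"
    using m by (simp add: fun_eq_iff dpow_def del: fact_Suc power_Suc of_nat_Suc)
  moreover have "((\<lambda>x. x ^ Suc m / of_nat (fact (Suc m))) has_field_derivative
          (1 + of_nat m) * (1 * x ^ m) / of_nat (fact (Suc m))) (at x)"
    by (intro DERIV_cdivide DERIV_power_Suc DERIV_ident)
  moreover have "(1 + of_nat m) * (1 * x ^ m) / of_nat (fact (Suc m)) = x ^ m / of_nat (fact m)"
    by (metis fact_Suc mult_1_left mult_divide_mult_cancel_left of_nat_Suc of_nat_neq_0 of_nat_fact)
  moreover have "dpow (n - 1) x = x ^ m / of_nat (fact m)"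
    using m by (simp add: dpow_def)
  ultimately show ?thesis by simp
qed

definition bra_monomial :: "int \<Rightarrow> int \<Rightarrow> int \<Rightarrow> int \<Rightarrow> int \<Rightarrow> int \<Rightarrow> cfun" where
  "bra_monomial a b c d e f z = dpow a (bra (z 1) (z 2)) * dpow b (bra (z 1) (z 3))
     * dpow c (bra (z 1) (z 4)) * dpow d (bra (z 2) (z 3)) * dpow e (bra (z 2) (z 4))
     * dpow f (bra (z 3) (z 4))"

lemma bra_mult_bra_monomial:
  "bra (z 1) (z 2) * bra_monomial a b c d e f z = of_int (a + 1) * bra_monomial (a + 1) b c d e f z"
  "bra (z 1) (z 3) * bra_monomial a b c d e f z = of_int (b + 1) * bra_monomial a (b + 1) c d e f z"
  "bra (z 1) (z 4) * bra_monomial a b c d e f z = of_int (c + 1) * bra_monomial a b (c + 1) d e f z"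
  "bra (z 2) (z 3) * bra_monomial a b c d e f z = of_int (d + 1) * bra_monomial a b c (d + 1) e f z"
  "bra (z 2) (z 4) * bra_monomial a b c d e f z = of_int (e + 1) * bra_monomial a b c d (e + 1) f z"
  "bra (z 3) (z 4) * bra_monomial a b c d e f z = of_int (f + 1) * bra_monomial a b c d e (f + 1) z"
  unfolding bra_monomial_def
  using mult_dpow[of "bra (z 1) (z 2)" a] mult_dpow[of "bra (z 1) (z 3)" b]
    mult_dpow[of "bra (z 1) (z 4)" c] mult_dpow[of "bra (z 2) (z 3)" d]
    mult_dpow[of "bra (z 2) (z 4)" e] mult_dpow[of "bra (z 3) (z 4)" f]
  by algebra+

lemma bra_antisym: "bra x y = - bra y x"
  by (simp add: bra_def)

lemma bra_self [simp]: "bra x x = 0"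
  by (simp add: bra_def)

definition bra_pderiv :: "nat \<Rightarrow> nat \<Rightarrow> nat \<Rightarrow> nat \<Rightarrow> (nat \<Rightarrow> nat \<Rightarrow> complex) \<Rightarrow> complex" where
  "bra_pderiv a b j A z = (if a = j then (if A = 0 then z b 1 else - z b 0) else 0)
                        + (if b = j then (if A = 0 then - z a 1 else z a 0) else 0)"

lemma has_field_derivative_dpow_bra:
  assumes "a \<noteq> b" "A \<in> {0, 1}"
  shows "((\<lambda>w. dpow n (bra ((z(j := (z j)(A := w))) a) ((z(j := (z j)(A := w))) b)))
           has_field_derivative bra_pderiv a b j A z * dpow (n - 1) (bra (z a) (z b))) (at (z j A))"
proof -
  have "((\<lambda>w. bra ((z(j := (z j)(A := w))) a) ((z(j := (z j)(A := w))) b))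
          has_field_derivative bra_pderiv a b j A z) (at (z j A))"
    using assms by (cases "a = j"; cases "b = j"; auto simp: bra_def bra_pderiv_def intro!: derivative_eq_intros)
  from DERIV_chain2[OF has_field_derivative_dpow this] show ?thesis
    by (simp add: mult.commute)
qed

lemma has_field_derivative_bra_monomial:
  assumes A: "A \<in> {0, 1}"
  shows "((\<lambda>w. bra_monomial a b c d e f (z(j := (z j)(A := w)))) has_field_derivative
      bra_pderiv 1 2 j A z * bra_monomial (a - 1) b c d e f z + bra_pderiv 1 3 j A z * bra_monomial a (b - 1) c d e f z
    + bra_pderiv 1 4 j A z * bra_monomial a b (c - 1) d e f z + bra_pderiv 2 3 j A z * bra_monomial a b c (d - 1) e f z
    + bra_pderiv 2 4 j A z * bra_monomial a b c d (e - 1) f z + bra_pderiv 3 4 j A z * bra_monomial a b c d e (f - 1) z)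
    (at (z j A))"
proof -
  note D = has_field_derivative_dpow_bra[OF _ A, of _ _ _ z j]
  show ?thesis unfolding bra_monomial_def
    by (rule DERIV_cong[OF DERIV_mult[OF DERIV_mult[OF DERIV_mult[OF DERIV_mult[OF DERIV_mult[OF
          D[of 1 2 a] D[of 1 3 b]] D[of 1 4 c]] D[of 2 3 d]] D[of 2 4 e]] D[of 3 4 f]]])
      (simp_all add: algebra_simps)
qed

lemma bra_monomial_differentiable:
  "A \<in> {0, 1} \<Longrightarrow> (\<lambda>w. bra_monomial a b c d e f (z(j := (z j)(A := w)))) field_differentiable at (z j A)"
  using has_field_derivative_bra_monomial field_differentiable_def by blast

definition bra_Eop :: "nat \<Rightarrow> nat \<Rightarrow> nat \<Rightarrow> nat \<Rightarrow> (nat \<Rightarrow> nat \<Rightarrow> complex) \<Rightarrow> complex" where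
  "bra_Eop a b i j z = (if a = j then bra (z i) (z b) else 0) + (if b = j then bra (z a) (z i) else 0)"

lemma Eop_bra_monomial: "Eop i j (bra_monomial a b c d e f) z =
      bra_Eop 1 2 i j z * bra_monomial (a - 1) b c d e f z + bra_Eop 1 3 i j z * bra_monomial a (b - 1) c d e f z
    + bra_Eop 1 4 i j z * bra_monomial a b (c - 1) d e f z + bra_Eop 2 3 i j z * bra_monomial a b c (d - 1) e f z
    + bra_Eop 2 4 i j z * bra_monomial a b c d (e - 1) f z + bra_Eop 3 4 i j z * bra_monomial a b c d e (f - 1) z"
  unfolding Eop_def pderiv_z_def
  by (simp add: DERIV_imp_deriv[OF has_field_derivative_bra_monomial] bra_pderiv_def bra_Eop_def bra_def
      algebra_simps)

lemma Eop_linear: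
  assumes f: "\<And>A. A \<in> {0, 1} \<Longrightarrow> (\<lambda>w. f (z(j := (z j)(A := w)))) field_differentiable at (z j A)"
      and g: "\<And>A. A \<in> {0, 1} \<Longrightarrow> (\<lambda>w. g (z(j := (z j)(A := w)))) field_differentiable at (z j A)"
  shows "Eop i j (\<lambda>z. c * f z + d * g z) z = c * Eop i j f z + d * Eop i j g z"
proof -
  have "pderiv_z j A (\<lambda>z. c * f z + d * g z) z = c * pderiv_z j A f z + d * pderiv_z j A g z"
    if A: "A \<in> {0, 1}" for A
    unfolding pderiv_z_def
    using f[OF A] g[OF A] by (intro DERIV_imp_deriv derivative_eq_intros) (auto simp: DERIV_deriv_iff_field_differentiable)
  then show ?thesis unfolding Eop_def by (simp add: algebra_simps)
qed

lemma Eop_scale: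
  assumes "\<And>A. A \<in> {0, 1} \<Longrightarrow> (\<lambda>w. f (z(j := (z j)(A := w)))) field_differentiable at (z j A)"
  shows "Eop i j (\<lambda>z. c * f z) z = c * Eop i j f z"
  using Eop_linear[OF assms assms, of i c 0] by simp

lemma Eop_bra_monomial_diagonal:
  "Eop 1 1 (bra_monomial a b c d e f) z = of_int (a + b + c) * bra_monomial a b c d e f z"
  "Eop 2 2 (bra_monomial a b c d e f) z = of_int (a + d + e) * bra_monomial a b c d e f z"
  "Eop 3 3 (bra_monomial a b c d e f) z = of_int (b + d + f) * bra_monomial a b c d e f z"
  by (simp_all add: Eop_bra_monomial bra_Eop_def bra_mult_bra_monomial algebra_simps del: One_nat_def)

lemma Eop_bra_monomial_offdiagonal:
  "Eop 2 1 (bra_monomial a b c d e f) z =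
     of_int (d + 1) * bra_monomial a (b - 1) c (d + 1) e f z + of_int (e + 1) * bra_monomial a b (c - 1) d (e + 1) f z"
  "Eop 1 2 (bra_monomial a b c d e f) z =
     of_int (b + 1) * bra_monomial a (b + 1) c (d - 1) e f z + of_int (c + 1) * bra_monomial a b (c + 1) d (e - 1) f z"
  "Eop 3 1 (bra_monomial a b c d e f) z =
     - of_int (d + 1) * bra_monomial (a - 1) b c (d + 1) e f z + of_int (f + 1) * bra_monomial a b (c - 1) d e (f + 1) z"
  "Eop 1 3 (bra_monomial a b c d e f) z =
     - of_int (a + 1) * bra_monomial (a + 1) b c (d - 1) e f z + of_int (c + 1) * bra_monomial a b (c + 1) d e (f - 1) z"
  by (simp_all add: Eop_bra_monomial bra_Eop_def bra_mult_bra_monomial algebra_simps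
      bra_antisym[of "z 3" "z 2"] bra_antisym[of "z 2" "z 1"] del: One_nat_def)

lemma twoJdot_12_bra_monomial: "twoJdot 1 2 (bra_monomial a b c d e f) z =
     (of_int ((d + 1) * b + (e + 1) * c - (a + b + c)) - of_int ((a + d + e) * (a + b + c)) / 2)
       * bra_monomial a b c d e f z
   + of_int ((d + 1) * (c + 1)) * bra_monomial a (b - 1) (c + 1) (d + 1) (e - 1) f z
   + of_int ((e + 1) * (b + 1)) * bra_monomial a (b + 1) (c - 1) (d - 1) (e + 1) f z"
proof -
  have E12_E21: "Eop 1 2 (Eop 2 1 (bra_monomial a b c d e f)) z
      = of_int (d + 1) * Eop 1 2 (bra_monomial a (b - 1) c (d + 1) e f) z
      + of_int (e + 1) * Eop 1 2 (bra_monomial a b (c - 1) d (e + 1) f) z"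
    unfolding Eop_bra_monomial_offdiagonal(1)[abs_def]
    by (rule Eop_linear[OF bra_monomial_differentiable bra_monomial_differentiable])
  have E11_E22: "Eop 1 1 (Eop 2 2 (bra_monomial a b c d e f)) z
      = of_int (a + d + e) * Eop 1 1 (bra_monomial a b c d e f) z"
    unfolding Eop_bra_monomial_diagonal(2)[abs_def]
    by (rule Eop_scale[OF bra_monomial_differentiable])
  show ?thesis
    unfolding twoJdot_def E12_E21 E11_E22 Eop_bra_monomial_offdiagonal(2) Eop_bra_monomial_diagonal(1)
    by (simp add: field_simps)
qed

text \<open>The minus signs come from E_31 [z_1|z_2> = [z_3|z_2> = - [z_2|z_3>.\<close>
lemma twoJdot_13_bra_monomial: "twoJdot 1 3 (bra_monomial a b c d e f) z =
     (of_int ((d + 1) * a + (f + 1) * c - (a + b + c)) - of_int ((b + d + f) * (a + b + c)) / 2)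
       * bra_monomial a b c d e f z
   - of_int ((d + 1) * (c + 1)) * bra_monomial (a - 1) b (c + 1) (d + 1) e (f - 1) z
   - of_int ((f + 1) * (a + 1)) * bra_monomial (a + 1) b (c - 1) (d - 1) e (f + 1) z"
proof -
  have E13_E31: "Eop 1 3 (Eop 3 1 (bra_monomial a b c d e f)) z
      = - of_int (d + 1) * Eop 1 3 (bra_monomial (a - 1) b c (d + 1) e f) z
      + of_int (f + 1) * Eop 1 3 (bra_monomial a b (c - 1) d e (f + 1)) z"
    unfolding Eop_bra_monomial_offdiagonal(3)[abs_def]
    by (rule Eop_linear[OF bra_monomial_differentiable bra_monomial_differentiable])
  have E11_E33: "Eop 1 1 (Eop 3 3 (bra_monomial a b c d e f)) z
      = of_int (b + d + f) * Eop 1 1 (bra_monomial a b c d e f) z"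
    unfolding Eop_bra_monomial_diagonal(3)[abs_def]
    by (rule Eop_scale[OF bra_monomial_differentiable])
  show ?thesis
    unfolding twoJdot_def E13_E31 E11_E33 Eop_bra_monomial_offdiagonal(4) Eop_bra_monomial_diagonal(1)
    by (simp add: field_simps)
qed

lemma pairs_eq: "pairs = {(1, 2), (1, 3), (1, 4), (2, 3), (2, 4), (3, 4)}"
  unfolding pairs_def by auto

lemma kval_eqs:
  "kval jj S T 1 2 = jj 1 + jj 2 - S" "kval jj S T 3 4 = jj 3 + jj 4 - S"
  "kval jj S T 1 3 = jj 1 + jj 3 - T" "kval jj S T 2 4 = jj 2 + jj 4 - T"
  "kval jj S T 1 4 = jj 1 + jj 4 - (Jtot jj - S - T)" "kval jj S T 2 3 = jj 2 + jj 3 - (Jtot jj - S - T)"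
  by (auto simp: kval_def doubleton_eq_iff)

lemma state_eq_bra_monomial:
  assumes "kval jj S T 1 2 = of_int a" "kval jj S T 1 3 = of_int b" "kval jj S T 1 4 = of_int c"
    "kval jj S T 2 3 = of_int d" "kval jj S T 2 4 = of_int e" "kval jj S T 3 4 = of_int f"
  shows "state jj S T = bra_monomial a b c d e f"
proof
  fix z
  show "state jj S T z = bra_monomial a b c d e f z"
  proof (cases "admissible jj S T")
    case True
    then have "0 \<le> a" "0 \<le> b" "0 \<le> c" "0 \<le> d" "0 \<le> e" "0 \<le> f"
      using assms unfolding admissible_def pairs_eq by auto
    with True show ?thesis
      using assms unfolding state_def pairs_eq bra_monomial_def by (simp add: dpow_def ac_simps)
  next
    case False
    then have "a < 0 \<or> b < 0 \<or> c < 0 \<or> d < 0 \<or> e < 0 \<or> f < 0"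
      using assms unfolding admissible_def pairs_eq by auto
    with False show ?thesis unfolding state_def bra_monomial_def by (auto simp: dpow_def)
  qed
qed

lemma kval_shift:
  "kval jj (S + s) (T + t) 1 2 = kval jj S T 1 2 - s" "kval jj (S + s) (T + t) 3 4 = kval jj S T 3 4 - s"
  "kval jj (S + s) (T + t) 1 3 = kval jj S T 1 3 - t" "kval jj (S + s) (T + t) 2 4 = kval jj S T 2 4 - t"
  "kval jj (S + s) (T + t) 1 4 = kval jj S T 1 4 + s + t"
  "kval jj (S + s) (T + t) 2 3 = kval jj S T 2 3 + s + t"
  by (simp_all add: kval_eqs del: One_nat_def)

lemma state_shift_eq_bra_monomial:
  fixes s t :: int
  assumes "kval jj S T 1 2 = of_int a" "kval jj S T 1 3 = of_int b" "kval jj S T 1 4 = of_int c"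
    "kval jj S T 2 3 = of_int d" "kval jj S T 2 4 = of_int e" "kval jj S T 3 4 = of_int f"
  shows "state jj (S + s) (T + t) = bra_monomial (a - s) (b - t) (c + s + t) (d + s + t) (e - t) (f - s)"
  by (intro state_eq_bra_monomial) (simp_all only: kval_shift assms of_int_add of_int_diff)

lemma admissible_obtains_exponents:
  assumes "admissible jj S T"
  obtains a b c d e f :: int where
    "kval jj S T 1 2 = of_int a" "kval jj S T 1 3 = of_int b" "kval jj S T 1 4 = of_int c"
    "kval jj S T 2 3 = of_int d" "kval jj S T 2 4 = of_int e" "kval jj S T 3 4 = of_int f"
proof -
  have "kval jj S T x y \<in> \<int>" if "(x, y) \<in> pairs" for x y
    using assms that unfolding admissible_def by auto
  then show ?thesis
    using that unfolding pairs_eq by (metis Ints_cases insertCI)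
qed

lemma twoJdot_12_state:
  assumes "admissible jj S T"
  shows "twoJdot 1 2 (state jj S T) z =
      complex_of_real (S * (S + 1) - jj 1 * (jj 1 + 1) - jj 2 * (jj 2 + 1)) * state jj S T z
    + (complex_of_real ((kval jj S T 1 4 + 1) * (kval jj S T 2 3 + 1)) * state jj S (T + 1) z
       - complex_of_real (kval jj S T 1 4 * kval jj S T 2 3) * state jj S T z)
    + (complex_of_real ((kval jj S T 1 3 + 1) * (kval jj S T 2 4 + 1)) * state jj S (T - 1) z
       - complex_of_real (kval jj S T 1 3 * kval jj S T 2 4) * state jj S T z)"
proof -
  obtain a b c d e f where k:
    "kval jj S T 1 2 = of_int a" "kval jj S T 1 3 = of_int b" "kval jj S T 1 4 = of_int c"
    "kval jj S T 2 3 = of_int d" "kval jj S T 2 4 = of_int e" "kval jj S T 3 4 = of_int f"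
    using admissible_obtains_exponents[OF assms] .
  have states: "state jj S T = bra_monomial a b c d e f"
    "state jj S (T + 1) = bra_monomial a (b - 1) (c + 1) (d + 1) (e - 1) f"
    "state jj S (T - 1) = bra_monomial a (b + 1) (c - 1) (d - 1) (e + 1) f"
    using state_shift_eq_bra_monomial[OF k, of 0 0] state_shift_eq_bra_monomial[OF k, of 0 1]
      state_shift_eq_bra_monomial[OF k, of 0 "-1"]
    by simp_all
  have casimir: "S * (S + 1) - jj 1 * (jj 1 + 1) - jj 2 * (jj 2 + 1)
      = of_int ((d + 1) * b + (e + 1) * c - (a + b + c)) - of_int ((a + d + e) * (a + b + c)) / 2
        + of_int c * of_int d + of_int b * of_int e"
    unfolding of_int_add of_int_mult of_int_diff of_int_1 k[unfolded kval_eqs, symmetric]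
    by (simp add: Jtot_def field_simps)
  show ?thesis
    unfolding states twoJdot_12_bra_monomial casimir k by (simp add: algebra_simps)
qed

lemma twoJdot_13_state:
  assumes "admissible jj S T"
  shows "twoJdot 1 3 (state jj S T) z =
      complex_of_real (T * (T + 1) - jj 1 * (jj 1 + 1) - jj 3 * (jj 3 + 1)) * state jj S T z
    - (complex_of_real ((kval jj S T 1 4 + 1) * (kval jj S T 2 3 + 1)) * state jj (S + 1) T z
       + complex_of_real (kval jj S T 1 4 * kval jj S T 2 3) * state jj S T z)
    - (complex_of_real ((kval jj S T 1 2 + 1) * (kval jj S T 3 4 + 1)) * state jj (S - 1) T z
       + complex_of_real (kval jj S T 1 2 * kval jj S T 3 4) * state jj S T z)"
proof -
  obtain a b c d e f where k:
    "kval jj S T 1 2 = of_int a" "kval jj S T 1 3 = of_int b" "kval jj S T 1 4 = of_int c"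
    "kval jj S T 2 3 = of_int d" "kval jj S T 2 4 = of_int e" "kval jj S T 3 4 = of_int f"
    using admissible_obtains_exponents[OF assms] .
  have states: "state jj S T = bra_monomial a b c d e f"
    "state jj (S + 1) T = bra_monomial (a - 1) b (c + 1) (d + 1) e (f - 1)"
    "state jj (S - 1) T = bra_monomial (a + 1) b (c - 1) (d - 1) e (f + 1)"
    using state_shift_eq_bra_monomial[OF k, of 0 0] state_shift_eq_bra_monomial[OF k, of 1 0]
      state_shift_eq_bra_monomial[OF k, of "-1" 0]
    by simp_all
  have casimir: "T * (T + 1) - jj 1 * (jj 1 + 1) - jj 3 * (jj 3 + 1)
      = of_int ((d + 1) * a + (f + 1) * c - (a + b + c)) - of_int ((b + d + f) * (a + b + c)) / 2
        + of_int c * of_int d + of_int a * of_int f"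
    unfolding of_int_add of_int_mult of_int_diff of_int_1 k[unfolded kval_eqs, symmetric]
    by (simp add: Jtot_def field_simps)
  show ?thesis
    unfolding states twoJdot_13_bra_monomial casimir k by (simp add: algebra_simps)
qed

lemma finite_combination_of_three:
  fixes h :: "real \<Rightarrow> cfun"
  assumes "x \<noteq> y" "x \<noteq> w" "y \<noteq> w"
  shows "\<exists>A c. finite A \<and> (\<lambda>z. \<alpha> * h x z + \<beta> * h y z + \<gamma> * h w z) = (\<lambda>z. \<Sum>v\<in>A. c v * h v z)"
proof (intro exI conjI)
  show "finite {x, y, w}" by simp
  show "(\<lambda>z. \<alpha> * h x z + \<beta> * h y z + \<gamma> * h w z)
      = (\<lambda>z. \<Sum>v\<in>{x, y, w}. ((\<lambda>_. 0)(x := \<alpha>, y := \<beta>, w := \<gamma>)) v * h v z)"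
    using assms by (simp add: fun_eq_iff)
qed

lemma twoJdot_12_state_combination:
  assumes "admissible jj S T"
  shows "\<exists>A c. finite A \<and> twoJdot 1 2 (state jj S T) = (\<lambda>z. \<Sum>T'\<in>A. c T' * state jj S T' z)"
proof -
  have combination: "twoJdot 1 2 (state jj S T) = (\<lambda>z.
      (complex_of_real (S * (S + 1) - jj 1 * (jj 1 + 1) - jj 2 * (jj 2 + 1))
       - complex_of_real (kval jj S T 1 4 * kval jj S T 2 3)
       - complex_of_real (kval jj S T 1 3 * kval jj S T 2 4)) * state jj S T z
      + complex_of_real ((kval jj S T 1 4 + 1) * (kval jj S T 2 3 + 1)) * state jj S (T + 1) z
      + complex_of_real ((kval jj S T 1 3 + 1) * (kval jj S T 2 4 + 1)) * state jj S (T - 1) z)"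
    using twoJdot_12_state[OF assms] by (simp add: fun_eq_iff algebra_simps)
  show ?thesis
    unfolding combination
    by (rule finite_combination_of_three[where x = T and y = "T + 1" and w = "T - 1" and h = "state jj S"])
      simp_all
qed

lemma twoJdot_13_state_combination:
  assumes "admissible jj S T"
  shows "\<exists>A c. finite A \<and> twoJdot 1 3 (state jj S T) = (\<lambda>z. \<Sum>S'\<in>A. c S' * state jj S' T z)"
proof -
  have combination: "twoJdot 1 3 (state jj S T) = (\<lambda>z.
      (complex_of_real (T * (T + 1) - jj 1 * (jj 1 + 1) - jj 3 * (jj 3 + 1))
       - complex_of_real (kval jj S T 1 4 * kval jj S T 2 3)
       - complex_of_real (kval jj S T 1 2 * kval jj S T 3 4)) * state jj S T z
      + - complex_of_real ((kval jj S T 1 4 + 1) * (kval jj S T 2 3 + 1)) * state jj (S + 1) T z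
      + - complex_of_real ((kval jj S T 1 2 + 1) * (kval jj S T 3 4 + 1)) * state jj (S - 1) T z)"
    using twoJdot_13_state[OF assms] by (simp add: fun_eq_iff algebra_simps)
  show ?thesis
    unfolding combination
    by (rule finite_combination_of_three[where x = S and y = "S + 1" and w = "S - 1" and h = "\<lambda>S'. state jj S' T"])
      simp_all
qed

theorem mainTheorem9:
  fixes jj :: "nat \<Rightarrow> real" and S T :: real
  assumes spins: "\<forall>i\<in>{1..4::nat}. jj i \<ge> 0 \<and> 2 * jj i \<in> \<int>"
    and Jint: "Jtot jj \<in> \<int>"
    and adm: "admissible jj S T"
  shows "(\<forall>z. twoJdot 1 2 (state jj S T) z =
            complex_of_real (S * (S + 1) - jj 1 * (jj 1 + 1) - jj 2 * (jj 2 + 1)) * state jj S T z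
          + (complex_of_real ((kval jj S T 1 4 + 1) * (kval jj S T 2 3 + 1)) * state jj S (T + 1) z
             - complex_of_real (kval jj S T 1 4 * kval jj S T 2 3) * state jj S T z)
          + (complex_of_real ((kval jj S T 1 3 + 1) * (kval jj S T 2 4 + 1)) * state jj S (T - 1) z
             - complex_of_real (kval jj S T 1 3 * kval jj S T 2 4) * state jj S T z))
       \<and> (\<exists>A :: real set. \<exists>c :: real \<Rightarrow> complex. finite A \<and>
            twoJdot 1 2 (state jj S T) = (\<lambda>z. \<Sum>T'\<in>A. c T' * state jj S T' z))
       \<and> (\<exists>A :: real set. \<exists>c :: real \<Rightarrow> complex. finite A \<and>
            twoJdot 1 3 (state jj S T) = (\<lambda>z. \<Sum>S'\<in>A. c S' * state jj S' T z))"
  using twoJdot_12_state[OF adm] twoJdot_12_state_combination[OF adm] twoJdot_13_state_combination[OF adm]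
  by blast

end
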